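(* Let $k \geq 2$ be an integer. Suppose that, for each $k$-admissible integer $n \geq 2k$, every non-reducible partial $k$-star design of order $n$ with at most $u(n,k)$ stars is completable. Then, for each $k$-admissible integer $n \geq 2k$, every partial $k$-star design of order $n$ with at most $u(n,k)$ stars is completable.
   Context: A $k$-star is a copy of $K_{1,k}$; its vertex of degree $k$ is the centre and the others are leaves. A partial $k$-star design of order $n$ is a pair $(V,\mathcal{A})$ where $V$ is a set of $n$ vertices and $\mathcal{A}$ is a set of edge-disjoint $k$-stars that are subgraphs of the complete graph $K_V$; it is completable if there is a set $\mathcal{B}\supseteq\mathcal{A}$ of edge-disjoint $k$-stars in $K_V$ covering all edges of $K_V$. A positive integer $n$ is $k$-admissible if $\binom{n}{2}\equiv 0 \pmod{k}$. Here \[u(n,k)= \begin{cases} 2 \lfloor \frac{n-2}{k} \rfloor-1 & \text{if $n \not \equiv 1\pmod{k}$},\\ \frac{2(n-1)}{k} - 2 & \text{if $n \equiv 1\pmod{k}$.} \end{cases} \] A partial $k$-star design $(V,\mathcal{A})$ of order $n$ is reducible if $n \equiv 1 \pmod{k}$, $|\mathcal{A}|=u(n,k)$, and there is a vertex which is the centre of at least one star in $\mathcal{A}$ and is not a leaf of any star in $\mathcal{A}$; otherwise it is non-reducible. *)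

theory Defs
  imports Main
begin

text \<open>A k-star in K_V is represented by a pair (centre, set of leaves).\<close>

definition star_edges :: "nat \<times> nat set \<Rightarrow> nat set set" where
  "star_edges S = {{fst S, x} | x. x \<in> snd S}"

definition is_k_star :: "nat \<Rightarrow> nat set \<Rightarrow> nat \<times> nat set \<Rightarrow> bool" where
  "is_k_star k V S \<longleftrightarrow> fst S \<in> V \<and> snd S \<subseteq> V \<and> fst S \<notin> snd S \<and> card (snd S) = k"

definition complete_edges :: "nat set \<Rightarrow> nat set set" where
  "complete_edges V = {{x, y} | x y. x \<in> V \<and> y \<in> V \<and> x \<noteq> y}"

definition partial_star_design :: "nat \<Rightarrow> nat set \<Rightarrow> (nat \<times> nat set) set \<Rightarrow> bool" where
  "partial_star_design k V A \<longleftrightarrow> finite V \<and> (\<forall>S\<in>A. is_k_star k V S) \<and>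
     (\<forall>S\<in>A. \<forall>T\<in>A. S \<noteq> T \<longrightarrow> star_edges S \<inter> star_edges T = {})"

definition completable :: "nat \<Rightarrow> nat set \<Rightarrow> (nat \<times> nat set) set \<Rightarrow> bool" where
  "completable k V A \<longleftrightarrow> (\<exists>B. A \<subseteq> B \<and> partial_star_design k V B \<and>
     (\<Union>S\<in>B. star_edges S) = complete_edges V)"

definition admissible :: "nat \<Rightarrow> nat \<Rightarrow> bool" where
  "admissible k n \<longleftrightarrow> (n choose 2) mod k = 0"

definition u :: "nat \<Rightarrow> nat \<Rightarrow> int" where
  "u n k = (if n mod k \<noteq> 1 mod k then 2 * ((int n - 2) div int k) - 1
            else 2 * (int n - 1) div int k - 2)"

definition reducible :: "nat \<Rightarrow> nat set \<Rightarrow> (nat \<times> nat set) set \<Rightarrow> bool" where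
  "reducible k V A \<longleftrightarrow> card V mod k = 1 mod k \<and> int (card A) = u (card V) k \<and>
     (\<exists>x. (\<exists>L. (x, L) \<in> A) \<and> (\<forall>S\<in>A. x \<notin> snd S))"

end

theory Submission
  imports Defs
begin

text \<open>If A is reducible, let x be a centre of A that is a leaf of no star. Deleting x together
with the stars centred at x leaves a partial design of order n - 1. It is admissible, since
C(n,2) = C(n-1,2) + (n-1) and k divides n - 1; it is not reducible, since n - 1 is not 1 mod k;
and it has fewer than u(n,k) stars, i.e. at most u(n-1,k) = u(n,k) - 1. So it is completable by
hypothesis. The leaf sets of the deleted stars are disjoint k-subsets of V - {x}, whose size
n - 1 is divisible by k, so they extend to a partition of V - {x} into k-sets; the stars centred
at x on these sets cover exactly the edges at x.\<close>

lemma obtain_partition_card: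
  assumes "finite R" "k dvd card R"
  obtains P where "pairwise disjnt P" "\<Union>P = R" "\<forall>p\<in>P. card p = k"
proof -
  have "\<exists>P. pairwise disjnt P \<and> \<Union>P = R \<and> (\<forall>p\<in>P. card p = k)"
    using assms
  proof (induction "card R" arbitrary: R rule: less_induct)
    case less
    show ?case
    proof (cases "R = {}")
      case True
      then show ?thesis by (intro exI[of _ "{}"]) auto
    next
      case False
      then have "0 < card R" using less.prems(1) by auto
      then have "k \<le> card R" "0 < k" using less.prems(2) by (auto intro: dvd_imp_le)
      then obtain p where p: "p \<subseteq> R" "card p = k" "finite p"
        by (metis obtain_subset_with_card_n)
      have "card (R - p) = card R - k" using p by (simp add: card_Diff_subset)
      then have "card (R - p) < card R" "k dvd card (R - p)"
        using \<open>0 < k\<close> \<open>k \<le> card R\<close> less.prems(2) by auto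
      then obtain P where P: "pairwise disjnt P" "\<Union>P = R - p" "\<forall>q\<in>P. card q = k"
        using less.hyps less.prems(1) by (meson finite_Diff)
      have "pairwise disjnt (insert p P)"
        using P(1,2) by (auto simp: pairwise_insert disjnt_def)
      moreover have "\<Union>(insert p P) = R" using P(2) p(1) by blast
      ultimately show ?thesis using P(3) p(2) by blast
    qed
  qed
  then show thesis using that by blast
qed

lemma obtain_partition_card_extending:
  assumes "finite W" "k dvd card W" "pairwise disjnt F" "\<forall>p\<in>F. p \<subseteq> W \<and> card p = k"
  obtains Q where "F \<subseteq> Q" "pairwise disjnt Q" "\<Union>Q = W" "\<forall>q\<in>Q. card q = k"
proof -
  have "card (\<Union>F) = sum card F"
    using assms(1,3,4) by (intro card_Union_disjoint) (auto intro: finite_subset)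
  also have "\<dots> = k * card F" using assms(4) by simp
  finally have "card (\<Union>F) = k * card F" .
  moreover have "\<Union>F \<subseteq> W" using assms(4) by blast
  ultimately have "k dvd card (W - \<Union>F)"
    using assms(1,2) by (simp add: card_Diff_subset finite_subset)
  then obtain P where P: "pairwise disjnt P" "\<Union>P = W - \<Union>F" "\<forall>p\<in>P. card p = k"
    using assms(1) by (metis obtain_partition_card finite_Diff)
  have "disjnt X Y" if "X \<in> F" "Y \<in> P" for X Y
    using that P(2) unfolding disjnt_def by blast
  then have "pairwise disjnt (F \<union> P)"
    using assms(3) P(1) unfolding pairwise_def by (metis UnE disjnt_sym)
  moreover have "\<Union>(F \<union> P) = W" using P(2) assms(4) by blast
  ultimately show ?thesis using that P(3) assms(4) by blast
qed

lemma complete_edges_remove_vertex: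
  "x \<in> V \<Longrightarrow> complete_edges V = complete_edges (V - {x}) \<union> star_edges (x, V - {x})"
  unfolding complete_edges_def star_edges_def by (auto simp: insert_commute)

lemma UN_star_edges_same_centre: "(\<Union>L\<in>Q. star_edges (c, L)) = star_edges (c, \<Union>Q)"
  unfolding star_edges_def by auto

lemma star_edges_disjoint_same_centre:
  "c \<notin> L \<Longrightarrow> L \<inter> M = {} \<Longrightarrow> star_edges (c, L) \<inter> star_edges (c, M) = {}"
  unfolding star_edges_def by (auto simp: doubleton_eq_iff)

lemma star_edges_disjoint_centre_outside:
  "fst S \<noteq> c \<Longrightarrow> c \<notin> snd S \<Longrightarrow> star_edges S \<inter> star_edges (c, L) = {}"
  unfolding star_edges_def by (auto simp: doubleton_eq_iff)

lemma partial_star_design_finite: "partial_star_design k V A \<Longrightarrow> finite A"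
proof -
  assume A: "partial_star_design k V A"
  then have "A \<subseteq> V \<times> Pow V" unfolding partial_star_design_def is_k_star_def by force
  then show "finite A" using A unfolding partial_star_design_def by (simp add: finite_subset)
qed

lemma partial_star_design_leaves_disjoint:
  assumes "partial_star_design k V A" "S \<in> A" "T \<in> A" "S \<noteq> T" "fst S = fst T"
  shows "snd S \<inter> snd T = {}"
proof -
  have "star_edges S \<inter> star_edges T = {}"
    using assms(1-4) unfolding partial_star_design_def by blast
  then show ?thesis using assms(5) unfolding star_edges_def by auto
qed

lemma partial_star_design_remove_vertex:
  assumes "partial_star_design k V A" "\<forall>S\<in>A. x \<notin> snd S"
  shows "partial_star_design k (V - {x}) {S\<in>A. fst S \<noteq> x}"
proof -
  have "is_k_star k (V - {x}) S" if "S \<in> A" "fst S \<noteq> x" for S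
    using assms that unfolding partial_star_design_def is_k_star_def by blast
  then show ?thesis using assms(1) unfolding partial_star_design_def by blast
qed

lemma partial_star_design_add_vertex_stars:
  assumes B: "partial_star_design k (V - {x}) B"
    and "x \<in> V" and Q: "pairwise disjnt Q" "\<Union>Q = V - {x}" "\<forall>L\<in>Q. card L = k"
  shows "partial_star_design k V (B \<union> Pair x ` Q)"
  unfolding partial_star_design_def
proof (intro conjI ballI impI)
  show "finite V" using B unfolding partial_star_design_def by simp
next
  fix S assume "S \<in> B \<union> Pair x ` Q"
  then show "is_k_star k V S"
    using B \<open>x \<in> V\<close> Q(2,3) unfolding partial_star_design_def is_k_star_def by auto
next
  have old_new: "star_edges S \<inter> star_edges (x, L) = {}" if "S \<in> B" for S L
    using B that star_edges_disjoint_centre_outside[of S x L]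
    unfolding partial_star_design_def is_k_star_def by auto
  have new_new: "star_edges (x, L) \<inter> star_edges (x, M) = {}" if "L \<in> Q" "M \<in> Q" "L \<noteq> M" for L M
    using Q(1,2) that star_edges_disjoint_same_centre[of x L M]
    unfolding pairwise_def disjnt_def by blast
  fix S T assume S: "S \<in> B \<union> Pair x ` Q" and T: "T \<in> B \<union> Pair x ` Q" and "S \<noteq> T"
  from S T show "star_edges S \<inter> star_edges T = {}"
  proof (elim UnE imageE)
    assume "S \<in> B" "T \<in> B"
    then show ?thesis using B \<open>S \<noteq> T\<close> unfolding partial_star_design_def by blast
  next
    fix M assume "S \<in> B" "T = (x, M)"
    then show ?thesis using old_new by blast
  next
    fix L assume "S = (x, L)" "T \<in> B"
    then show ?thesis using old_new by (metis Int_commute)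
  next
    fix L M assume "L \<in> Q" "M \<in> Q" "S = (x, L)" "T = (x, M)"
    then show ?thesis using new_new \<open>S \<noteq> T\<close> by blast
  qed
qed

lemma cover_add_vertex_stars:
  assumes "(\<Union>S\<in>B. star_edges S) = complete_edges (V - {x})" "x \<in> V" "\<Union>Q = V - {x}"
  shows "(\<Union>S\<in>B \<union> Pair x ` Q. star_edges S) = complete_edges V"
  using assms complete_edges_remove_vertex[of x V] UN_star_edges_same_centre[of x Q]
  by simp

lemma completable_of_completable_remove_centre:
  assumes A: "partial_star_design k V A" and "x \<in> V" and no_leaf: "\<forall>S\<in>A. x \<notin> snd S"
    and "k dvd card V - 1" and "completable k (V - {x}) {S\<in>A. fst S \<noteq> x}"
  shows "completable k V A"
proof -
  obtain B where B: "{S\<in>A. fst S \<noteq> x} \<subseteq> B" "partial_star_design k (V - {x}) B"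
    "(\<Union>S\<in>B. star_edges S) = complete_edges (V - {x})"
    using assms(5) unfolding completable_def by blast
  define F where "F = snd ` {S\<in>A. fst S = x}"
  have "pairwise disjnt F"
    unfolding F_def pairwise_def disjnt_def
    using partial_star_design_leaves_disjoint[OF A] by fastforce
  moreover have "\<forall>L\<in>F. L \<subseteq> V - {x} \<and> card L = k"
    using A no_leaf unfolding F_def partial_star_design_def is_k_star_def by blast
  moreover have "finite V" using A unfolding partial_star_design_def by simp
  ultimately obtain Q where Q: "F \<subseteq> Q" "pairwise disjnt Q" "\<Union>Q = V - {x}" "\<forall>L\<in>Q. card L = k"
    using obtain_partition_card_extending[of "V - {x}" k F] assms(2,4) by auto
  have "A \<subseteq> B \<union> Pair x ` Q"
  proof
    fix S assume "S \<in> A"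
    then show "S \<in> B \<union> Pair x ` Q"
      using B(1) Q(1) unfolding F_def by (cases S) force
  qed
  then show ?thesis
    unfolding completable_def
    using partial_star_design_add_vertex_stars[OF B(2) assms(2) Q(2-4)]
      cover_add_vertex_stars[OF B(3) assms(2) Q(3)]
    by blast
qed

lemma admissible_Suc_iff: "k dvd n \<Longrightarrow> admissible k (Suc n) \<longleftrightarrow> admissible k n"
  unfolding admissible_def numeral_2_eq_2 by (simp add: dvd_add_right_iff flip: dvd_eq_mod_eq_0)

lemma u_pred:
  assumes "k \<ge> 2" "n mod k = 1"
  shows "u (n - 1) k = u n k - 1"
proof -
  define q where "q = n div k"
  have n: "n = k * q + 1" using assms(2) unfolding q_def by (metis div_mult_mod_eq mult.commute)
  have "u n k = 2 * int q - 2"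
    using assms n unfolding u_def by simp
  moreover have "(int k * int q - 2) div int k = int q - 1"
  proof -
    have split: "int k * int q - 2 = (int k - 2) + (int q - 1) * int k" by (simp add: algebra_simps)
    have "((int k - 2) + (int q - 1) * int k) div int k = int q - 1"
      using assms(1) by (subst div_mult_self1) auto
    then show ?thesis unfolding split .
  qed
  then have "u (n - 1) k = 2 * int q - 3"
    using assms(1) n unfolding u_def by simp
  ultimately show ?thesis by simp
qed

lemma remove_centre_of_reducible:
  assumes "k \<ge> 2" and A: "partial_star_design k V A" and "reducible k V A"
  obtains x where "x \<in> V" "\<forall>S\<in>A. x \<notin> snd S" "card V mod k = 1"
    "partial_star_design k (V - {x}) {S\<in>A. fst S \<noteq> x}"
    "\<not> reducible k (V - {x}) {S\<in>A. fst S \<noteq> x}"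
    "int (card {S\<in>A. fst S \<noteq> x}) \<le> u (card (V - {x})) k"
proof -
  obtain x L where "(x, L) \<in> A" and no_leaf: "\<forall>S\<in>A. x \<notin> snd S"
    and n: "card V mod k = 1" and card_A: "int (card A) = u (card V) k"
    using assms(1,3) unfolding reducible_def by auto
  have "x \<in> V" using A \<open>(x, L) \<in> A\<close> unfolding partial_star_design_def is_k_star_def by auto
  then have card_V': "card (V - {x}) = card V - 1"
    using A unfolding partial_star_design_def by simp
  have "{S\<in>A. fst S \<noteq> x} \<subset> A" using \<open>(x, L) \<in> A\<close> by force
  then have "card {S\<in>A. fst S \<noteq> x} < card A"
    using partial_star_design_finite[OF A] by (rule psubset_card_mono[rotated])
  then have "int (card {S\<in>A. fst S \<noteq> x}) \<le> u (card (V - {x})) k"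
    using card_A card_V' u_pred[OF assms(1) n] by simp
  moreover have "card (V - {x}) mod k = 0"
    using card_V' dvd_minus_mod[of k "card V"] n by simp
  then have "\<not> reducible k (V - {x}) {S\<in>A. fst S \<noteq> x}"
    using assms(1) unfolding reducible_def by simp
  ultimately show thesis
    using that \<open>x \<in> V\<close> no_leaf n partial_star_design_remove_vertex[OF A no_leaf] by blast
qed

theorem lemma7:
  fixes k :: nat
  assumes "k \<ge> 2"
    and "\<forall>n V A. admissible k n \<and> n \<ge> 2 * k \<and> finite V \<and> card V = n \<and>
           partial_star_design k V A \<and> \<not> reducible k V A \<and> int (card A) \<le> u n k
           \<longrightarrow> completable k V A"
  shows "\<forall>n V A. admissible k n \<and> n \<ge> 2 * k \<and> finite V \<and> card V = n \<and>
           partial_star_design k V A \<and> int (card A) \<le> u n k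
           \<longrightarrow> completable k V A"
proof (intro allI impI)
  fix n V A
  assume H: "admissible k n \<and> n \<ge> 2 * k \<and> finite V \<and> card V = n \<and>
    partial_star_design k V A \<and> int (card A) \<le> u n k"
  then have A: "partial_star_design k V A" and V: "finite V" "card V = n" by auto
  show "completable k V A"
  proof (cases "reducible k V A")
    case False
    then show ?thesis using assms(2) H by blast
  next
    case True
    then obtain x where x: "x \<in> V" "\<forall>S\<in>A. x \<notin> snd S" "card V mod k = 1"
      and A': "partial_star_design k (V - {x}) {S\<in>A. fst S \<noteq> x}"
        "\<not> reducible k (V - {x}) {S\<in>A. fst S \<noteq> x}"
        "int (card {S\<in>A. fst S \<noteq> x}) \<le> u (card (V - {x})) k"
      by (rule remove_centre_of_reducible[OF assms(1) A])
    have "k dvd n - 1" using x(3) V(2) by (metis dvd_minus_mod)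
    moreover have "n \<noteq> 2 * k" using x(3) V(2) by auto
    ultimately have "admissible k (card (V - {x}))" "2 * k \<le> card (V - {x})"
      using H admissible_Suc_iff[of k "n - 1"] x(1) V by (auto simp: Suc_diff_1)
    then have "completable k (V - {x}) {S\<in>A. fst S \<noteq> x}"
      using assms(2) A' V(1) by simp
    then show ?thesis
      using completable_of_completable_remove_centre[OF A x(1,2)] V(2) \<open>k dvd n - 1\<close> by simp
  qed
qed

end
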